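(* Let $G$ be a finite graph in which every vertex has degree at most $d$. Then $$\tfrac12 PW(G)\le BW(G)\le d\cdot PW(G).$$
   Context: Bubble width: a bubbling of $G$ is an ordering $b_1,\dots,b_N$ of all vertices of $G$. Set $S_i=\{b_1,\dots,b_i\}$, and let $z_i$ be the set of edges with exactly one endpoint in $S_i$. The width of the bubbling is $\max_i|z_i|$. $BW(G)$ is the minimum width over all bubblings of $G$. Path width: a path decomposition of $G$ is a path $T$ (a tree with all nodes of degree at most 2) together with a subset $\tilde t\subseteq V(G)$ assigned to each node $t$ of $T$, such that: (1) for each edge $(v,w)$ of $G$, some subset $\tilde t$ contains both $v$ and $w$; (2) if $v$ lies in $\tilde t_1$ and in $\tilde t_2$, then $v$ lies in every subset on the path between $t_1$ and $t_2$. The width of the decomposition is $\max_t|\tilde t|$ (the number of vertices in the largest subset, with no $-1$). $PW(G)$ is the minimum width over all path decompositions of $G$. *)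

theory Defs
  imports Complex_Main
begin

definition finite_graph :: "'a set \<Rightarrow> ('a \<Rightarrow> 'a \<Rightarrow> bool) \<Rightarrow> bool" where
  "finite_graph V E \<longleftrightarrow> finite V \<and> (\<forall>v w. E v w \<longrightarrow> v \<in> V \<and> w \<in> V)
     \<and> (\<forall>v w. E v w \<longrightarrow> E w v) \<and> (\<forall>v. \<not> E v v)"

definition graph_edges :: "('a \<Rightarrow> 'a \<Rightarrow> bool) \<Rightarrow> 'a set set" where
  "graph_edges E = {{v, w} | v w. E v w}"

definition degree :: "('a \<Rightarrow> 'a \<Rightarrow> bool) \<Rightarrow> 'a \<Rightarrow> nat" where
  "degree E v = card {w. E v w}"

definition is_bubbling :: "'a set \<Rightarrow> 'a list \<Rightarrow> bool" where
  "is_bubbling V bs \<longleftrightarrow> distinct bs \<and> set bs = V"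

definition cut_edges :: "('a \<Rightarrow> 'a \<Rightarrow> bool) \<Rightarrow> 'a set \<Rightarrow> 'a set set" where
  "cut_edges E S = {e \<in> graph_edges E. card (e \<inter> S) = 1}"

text \<open>Width of a bubbling: max over i of |z_i| (i = 0 contributes 0 and only
  matters for the empty graph).\<close>
definition bubbling_width :: "('a \<Rightarrow> 'a \<Rightarrow> bool) \<Rightarrow> 'a list \<Rightarrow> nat" where
  "bubbling_width E bs = Max ((\<lambda>i. card (cut_edges E (set (take i bs)))) ` {0..length bs})"

definition BW :: "'a set \<Rightarrow> ('a \<Rightarrow> 'a \<Rightarrow> bool) \<Rightarrow> nat" where
  "BW V E = (LEAST k. \<exists>bs. is_bubbling V bs \<and> bubbling_width E bs = k)"

text \<open>Path decomposition: the path T is represented by the nonempty list of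
  its bags in path order.\<close>
definition is_path_decomp :: "'a set \<Rightarrow> ('a \<Rightarrow> 'a \<Rightarrow> bool) \<Rightarrow> 'a set list \<Rightarrow> bool" where
  "is_path_decomp V E ts \<longleftrightarrow> ts \<noteq> [] \<and> (\<forall>t \<in> set ts. t \<subseteq> V)
     \<and> (\<forall>v w. E v w \<longrightarrow> (\<exists>t \<in> set ts. v \<in> t \<and> w \<in> t))
     \<and> (\<forall>v i j k. i \<le> j \<and> j \<le> k \<and> k < length ts \<and> v \<in> ts ! i \<and> v \<in> ts ! k
            \<longrightarrow> v \<in> ts ! j)"

definition path_decomp_width :: "'a set list \<Rightarrow> nat" where
  "path_decomp_width ts = Max (card ` set ts)"

definition PW :: "'a set \<Rightarrow> ('a \<Rightarrow> 'a \<Rightarrow> bool) \<Rightarrow> nat" where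
  "PW V E = (LEAST k. \<exists>ts. is_path_decomp V E ts \<and> path_decomp_width ts = k)"

end

theory Submission
  imports Defs
begin

text \<open>A bubbling yields a path decomposition whose i-th bag consists of the endpoints of
  the edges cut by the prefix of length i: the prefixes grow, so every vertex lies in a
  contiguous run of bags, and a bag has at most twice as many vertices as the cut has edges.
  Conversely, order the vertices of a path decomposition by the first bag containing them, and
  let t be the largest first-bag index within a prefix. An edge uv cut by the prefix, u inside,
  has first(u) \<le> t \<le> first(v), and u also lies in a bag containing v, hence in a bag
  at or after position t. By contiguity u lies in bag t, so the cut consists of edges incident to
  a single bag, at most d per vertex.\<close>

lemma finite_graph_edges:
  assumes "finite_graph V E"
  shows "finite (graph_edges E)"
proof (rule finite_subset)
  show "graph_edges E \<subseteq> Pow V"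
    using assms unfolding finite_graph_def graph_edges_def by auto
  show "finite (Pow V)"
    using assms unfolding finite_graph_def by simp
qed

lemma finite_incident_edges:
  assumes "finite_graph V E"
  shows "finite (\<Union>u\<in>B. (\<lambda>w. {u, w}) ` {w. E u w})"
proof (rule finite_subset)
  show "(\<Union>u\<in>B. (\<lambda>w. {u, w}) ` {w. E u w}) \<subseteq> graph_edges E"
    unfolding graph_edges_def by blast
qed (rule finite_graph_edges[OF assms])

lemma finite_neighbours:
  assumes "finite_graph V E"
  shows "finite {w. E v w}"
  using assms unfolding finite_graph_def by (metis (mono_tags) finite_subset mem_Collect_eq subsetI)

lemma cut_edgeE:
  assumes "finite_graph V E" and "e \<in> cut_edges E S"
  obtains u v where "e = {u, v}" "E u v" "u \<in> S" "v \<notin> S"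
proof -
  obtain a b where ab: "e = {a, b}" "E a b" "card ({a, b} \<inter> S) = 1"
    using assms(2) unfolding cut_edges_def graph_edges_def by blast
  have "a \<noteq> b" "E b a"
    using ab(2) assms(1) unfolding finite_graph_def by auto
  with ab that show thesis
    by (cases "a \<in> S"; cases "b \<in> S") (auto simp: insert_commute)
qed

lemma cut_edgeI:
  assumes "E u v" "u \<in> S" "v \<notin> S"
  shows "{u, v} \<in> cut_edges E S"
proof -
  have "u \<noteq> v"
    using assms by blast
  with assms show ?thesis
    unfolding cut_edges_def graph_edges_def by auto
qed

definition cut_vertices :: "('a \<Rightarrow> 'a \<Rightarrow> bool) \<Rightarrow> 'a set \<Rightarrow> 'a set" where
  "cut_vertices E S = \<Union>(cut_edges E S)"

lemma mem_cut_vertices_iff: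
  assumes "finite_graph V E"
  shows "v \<in> cut_vertices E S \<longleftrightarrow> (\<exists>u. E v u \<and> (v \<in> S \<longleftrightarrow> u \<notin> S))"
proof
  assume "v \<in> cut_vertices E S"
  then obtain e where "e \<in> cut_edges E S" "v \<in> e"
    unfolding cut_vertices_def by blast
  then obtain a b where "v \<in> {a, b}" "E a b" "a \<in> S" "b \<notin> S"
    by (metis cut_edgeE[OF assms])
  moreover have "E b a"
    using \<open>E a b\<close> assms unfolding finite_graph_def by blast
  ultimately show "\<exists>u. E v u \<and> (v \<in> S \<longleftrightarrow> u \<notin> S)"
    by blast
next
  assume "\<exists>u. E v u \<and> (v \<in> S \<longleftrightarrow> u \<notin> S)"
  then obtain u where "E v u" "E u v" "v \<in> S \<longleftrightarrow> u \<notin> S"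
    using assms unfolding finite_graph_def by blast
  then have "{v, u} \<in> cut_edges E S \<or> {u, v} \<in> cut_edges E S"
    using cut_edgeI[of E v u S] cut_edgeI[of E u v S] by blast
  then show "v \<in> cut_vertices E S"
    unfolding cut_vertices_def by blast
qed

lemma cut_vertices_subset:
  assumes "finite_graph V E"
  shows "cut_vertices E S \<subseteq> V"
  using assms unfolding finite_graph_def by (auto simp: mem_cut_vertices_iff[OF assms])

lemma card_cut_vertices_le:
  "card (cut_vertices E S) \<le> 2 * card (cut_edges E S)"
proof -
  have "card e \<le> 2" if "e \<in> cut_edges E S" for e
    using that unfolding cut_edges_def graph_edges_def by (auto simp: card_insert_le_m1)
  then have "sum card (cut_edges E S) \<le> 2 * card (cut_edges E S)"
    using sum_bounded_above[of "cut_edges E S" card 2] by simp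
  then show ?thesis
    unfolding cut_vertices_def using card_Union_le_sum_card le_trans by blast
qed

lemma cut_vertices_convex:
  assumes "finite_graph V E" and "A \<subseteq> B" "B \<subseteq> C"
    and "v \<in> cut_vertices E A" "v \<in> cut_vertices E C"
  shows "v \<in> cut_vertices E B"
  using assms(2-) unfolding mem_cut_vertices_iff[OF assms(1)]
  by (cases "v \<in> B") blast+

lemma separating_prefix_exists:
  assumes "v \<in> set xs" "w \<in> set xs" "v \<noteq> w"
  shows "\<exists>i\<le>length xs. v \<in> set (take i xs) \<longleftrightarrow> w \<notin> set (take i xs)"
  using assms
proof (induction xs)
  case Nil
  then show ?case by simp
next
  case (Cons x xs)
  show ?case
  proof (cases "x = v \<or> x = w")
    case True
    with Cons.prems show ?thesis
      by (intro exI[of _ 1]) auto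
  next
    case False
    with Cons obtain i where "i \<le> length xs" "v \<in> set (take i xs) \<longleftrightarrow> w \<notin> set (take i xs)"
      by auto
    with False show ?thesis
      by (intro exI[of _ "Suc i"]) auto
  qed
qed

lemma bubbling_width_le_iff:
  "bubbling_width E bs \<le> k \<longleftrightarrow> (\<forall>i\<le>length bs. card (cut_edges E (set (take i bs))) \<le> k)"
  unfolding bubbling_width_def by (subst Max_le_iff) auto

lemma path_decomp_width_le_iff:
  assumes "ts \<noteq> []"
  shows "path_decomp_width ts \<le> k \<longleftrightarrow> (\<forall>t\<in>set ts. card t \<le> k)"
  unfolding path_decomp_width_def using assms by (subst Max_le_iff) auto

lemma card_le_path_decomp_width:
  "t \<in> set ts \<Longrightarrow> card t \<le> path_decomp_width ts"
  unfolding path_decomp_width_def by simp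

lemma path_decomp_contiguous:
  assumes "is_path_decomp V E ts" "i \<le> j" "j \<le> k" "k < length ts" "v \<in> ts ! i" "v \<in> ts ! k"
  shows "v \<in> ts ! j"
  using assms unfolding is_path_decomp_def by blast

lemma BW_le:
  assumes "is_bubbling V bs"
  shows "BW V E \<le> bubbling_width E bs"
  unfolding BW_def by (rule Least_le) (use assms in blast)

lemma PW_le:
  assumes "is_path_decomp V E ts"
  shows "PW V E \<le> path_decomp_width ts"
  unfolding PW_def by (rule Least_le) (use assms in blast)

lemma BW_attained:
  assumes "finite_graph V E"
  obtains bs where "is_bubbling V bs" "bubbling_width E bs = BW V E"
proof -
  have "finite V"
    using assms unfolding finite_graph_def by blast
  then obtain bs where "is_bubbling V bs"
    unfolding is_bubbling_def using finite_distinct_list by blast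
  then have "\<exists>k bs. is_bubbling V bs \<and> bubbling_width E bs = k"
    by blast
  then have "\<exists>bs. is_bubbling V bs \<and> bubbling_width E bs = BW V E"
    unfolding BW_def by (rule LeastI_ex)
  with that show thesis
    by blast
qed

lemma PW_attained:
  assumes "finite_graph V E"
  obtains ts where "is_path_decomp V E ts" "path_decomp_width ts = PW V E"
proof -
  have "is_path_decomp V E [V]"
    using assms unfolding is_path_decomp_def finite_graph_def by auto
  then have "\<exists>k ts. is_path_decomp V E ts \<and> path_decomp_width ts = k"
    by blast
  then have "\<exists>ts. is_path_decomp V E ts \<and> path_decomp_width ts = PW V E"
    unfolding PW_def by (rule LeastI_ex)
  with that show thesis
    by blast
qed

definition prefix_cut_decomp :: "('a \<Rightarrow> 'a \<Rightarrow> bool) \<Rightarrow> 'a list \<Rightarrow> 'a set list" where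
  "prefix_cut_decomp E bs = map (\<lambda>i. cut_vertices E (set (take i bs))) [0..<Suc (length bs)]"

lemma length_prefix_cut_decomp:
  "length (prefix_cut_decomp E bs) = Suc (length bs)"
  unfolding prefix_cut_decomp_def by simp

lemma nth_prefix_cut_decomp:
  "i \<le> length bs \<Longrightarrow> prefix_cut_decomp E bs ! i = cut_vertices E (set (take i bs))"
  unfolding prefix_cut_decomp_def by (simp del: upt_Suc)

lemma set_prefix_cut_decomp:
  "set (prefix_cut_decomp E bs) = (\<lambda>i. cut_vertices E (set (take i bs))) ` {..length bs}"
  unfolding prefix_cut_decomp_def by (auto simp del: upt_Suc)

lemma is_path_decomp_prefix_cut_decomp:
  assumes G: "finite_graph V E" and "is_bubbling V bs"
  shows "is_path_decomp V E (prefix_cut_decomp E bs)"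
  unfolding is_path_decomp_def
proof (intro conjI allI impI)
  show "prefix_cut_decomp E bs \<noteq> []"
    unfolding prefix_cut_decomp_def by simp
  show "\<forall>t\<in>set (prefix_cut_decomp E bs). t \<subseteq> V"
    unfolding set_prefix_cut_decomp using cut_vertices_subset[OF G] by blast
next
  fix v w
  assume "E v w"
  then have "v \<in> set bs" "w \<in> set bs" "v \<noteq> w" "E w v"
    using G \<open>is_bubbling V bs\<close> unfolding finite_graph_def is_bubbling_def by auto
  then obtain i where "i \<le> length bs" "v \<in> set (take i bs) \<longleftrightarrow> w \<notin> set (take i bs)"
    using separating_prefix_exists by metis
  moreover from this have "v \<in> cut_vertices E (set (take i bs))" "w \<in> cut_vertices E (set (take i bs))"
    unfolding mem_cut_vertices_iff[OF G] using \<open>E v w\<close> \<open>E w v\<close> by blast+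
  ultimately show "\<exists>t\<in>set (prefix_cut_decomp E bs). v \<in> t \<and> w \<in> t"
    unfolding set_prefix_cut_decomp by blast
next
  fix v i j k
  assume h: "i \<le> j \<and> j \<le> k \<and> k < length (prefix_cut_decomp E bs)
    \<and> v \<in> prefix_cut_decomp E bs ! i \<and> v \<in> prefix_cut_decomp E bs ! k"
  then have "i \<le> length bs" "j \<le> length bs" "k \<le> length bs"
    by (simp_all add: length_prefix_cut_decomp)
  with h show "v \<in> prefix_cut_decomp E bs ! j"
    using cut_vertices_convex[OF G set_take_subset_set_take set_take_subset_set_take, of i j k]
    by (simp add: nth_prefix_cut_decomp)
qed

lemma path_decomp_width_prefix_cut_decomp:
  "path_decomp_width (prefix_cut_decomp E bs) \<le> 2 * bubbling_width E bs"
proof -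
  have "card (cut_vertices E (set (take i bs))) \<le> 2 * bubbling_width E bs"
    if "i \<le> length bs" for i
  proof -
    have "card (cut_edges E (set (take i bs))) \<le> bubbling_width E bs"
      using that bubbling_width_le_iff[of E bs "bubbling_width E bs"] by simp
    then show ?thesis
      using card_cut_vertices_le[of E "set (take i bs)"] by linarith
  qed
  moreover have "prefix_cut_decomp E bs \<noteq> []"
    unfolding prefix_cut_decomp_def by simp
  ultimately show ?thesis
    unfolding path_decomp_width_le_iff[OF \<open>prefix_cut_decomp E bs \<noteq> []\<close>]
      set_prefix_cut_decomp by blast
qed

lemma PW_le_two_BW:
  assumes "finite_graph V E"
  shows "PW V E \<le> 2 * BW V E"
proof -
  obtain bs where "is_bubbling V bs" "bubbling_width E bs = BW V E"
    using BW_attained[OF assms] .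
  have "PW V E \<le> path_decomp_width (prefix_cut_decomp E bs)"
    using PW_le is_path_decomp_prefix_cut_decomp[OF assms \<open>is_bubbling V bs\<close>] .
  also have "\<dots> \<le> 2 * BW V E"
    using path_decomp_width_prefix_cut_decomp \<open>bubbling_width E bs = BW V E\<close> by metis
  finally show ?thesis .
qed

text \<open>For a vertex lying in no bag the LEAST is unspecified. Such a vertex is isolated, so its
  position in the vertex order sorted by this key does not matter.\<close>
definition first_bag :: "'a set list \<Rightarrow> 'a \<Rightarrow> nat" where
  "first_bag ts v = (LEAST t. t < length ts \<and> v \<in> ts ! t)"

lemma first_bag_le:
  "s < length ts \<Longrightarrow> v \<in> ts ! s \<Longrightarrow> first_bag ts v \<le> s"
  unfolding first_bag_def by (rule Least_le) blast

lemma mem_nth_first_bag: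
  "s < length ts \<Longrightarrow> v \<in> ts ! s \<Longrightarrow> v \<in> ts ! first_bag ts v"
  unfolding first_bag_def by (rule conjunct2, rule LeastI) blast

lemma mem_bag_between_first_bags:
  assumes "is_path_decomp V E ts" "E u v"
    and "first_bag ts u \<le> t" "t \<le> first_bag ts v"
  shows "t < length ts" "u \<in> ts ! t"
proof -
  obtain s where s: "s < length ts" "u \<in> ts ! s" "v \<in> ts ! s"
    using assms(1,2) unfolding is_path_decomp_def by (metis in_set_conv_nth)
  have "t \<le> s"
    using first_bag_le[OF s(1,3)] assms(4) by linarith
  then show "t < length ts"
    using s(1) by linarith
  show "u \<in> ts ! t"
    using assms(1,3) \<open>t \<le> s\<close> s(1) mem_nth_first_bag[OF s(1,2)] s(2)
    by (rule path_decomp_contiguous)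
qed

lemma card_incident_edges_le:
  assumes G: "finite_graph V E" and deg: "\<forall>v\<in>V. degree E v \<le> d" and "B \<subseteq> V"
  shows "card (\<Union>u\<in>B. (\<lambda>w. {u, w}) ` {w. E u w}) \<le> d * card B"
proof -
  have "finite B"
    using G \<open>B \<subseteq> V\<close> unfolding finite_graph_def by (meson finite_subset)
  have "card ((\<lambda>w. {u, w}) ` {w. E u w}) \<le> d" if "u \<in> B" for u
    using card_image_le[OF finite_neighbours[OF G]] deg that \<open>B \<subseteq> V\<close>
    unfolding degree_def by (meson le_trans subsetD)
  then have "(\<Sum>u\<in>B. card ((\<lambda>w. {u, w}) ` {w. E u w})) \<le> d * card B"
    using sum_bounded_above[of B "\<lambda>u. card ((\<lambda>w. {u, w}) ` {w. E u w})" d] by (simp add: mult.commute)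
  then show ?thesis
    using card_UN_le[OF \<open>finite B\<close>] le_trans by blast
qed

lemma sorted_map_take_drop_le:
  assumes "sorted (map f xs)" "u \<in> set (take i xs)" "v \<in> set (drop i xs)"
  shows "f u \<le> f v"
  using assms sorted_append[of "map f (take i xs)" "map f (drop i xs)"]
  by (simp flip: map_append)

lemma card_cut_edges_le_if_sorted_first_bag:
  assumes G: "finite_graph V E" and deg: "\<forall>v\<in>V. degree E v \<le> d"
    and ts: "is_path_decomp V E ts"
    and bs: "set bs = V" "sorted (map (first_bag ts) bs)"
  shows "card (cut_edges E (set (take i bs))) \<le> d * path_decomp_width ts"
proof (cases "cut_edges E (set (take i bs)) = {}")
  case True
  then show ?thesis by simp
next
  case False
  define S where "S = set (take i bs)"
  define t where "t = Max (first_bag ts ` S)"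
  obtain u0 v0 where uv0: "E u0 v0" "u0 \<in> S" "v0 \<notin> S"
    using False cut_edgeE[OF G] unfolding S_def by blast
  have between: "first_bag ts u \<le> t \<and> t \<le> first_bag ts v" if "u \<in> S" "v \<in> V - S" for u v
  proof
    have "finite S"
      unfolding S_def by simp
    then show "first_bag ts u \<le> t"
      unfolding t_def using \<open>u \<in> S\<close> by simp
    have "t \<in> first_bag ts ` S"
      unfolding t_def using \<open>finite S\<close> \<open>u \<in> S\<close> by (intro Max_in) auto
    then obtain w where "w \<in> S" "t = first_bag ts w"
      by blast
    moreover have "v \<in> set (drop i bs)"
      using that bs(1) unfolding S_def by (metis Diff_iff Un_iff append_take_drop_id set_append)
    ultimately show "t \<le> first_bag ts v"
      using bs(2) sorted_map_take_drop_le unfolding S_def by metis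
  qed
  have "v0 \<in> V"
    using G uv0(1) unfolding finite_graph_def by blast
  then have "t < length ts"
    using mem_bag_between_first_bags(1)[OF ts uv0(1)] between uv0 by blast
  have "cut_edges E S \<subseteq> (\<Union>u\<in>ts ! t. (\<lambda>w. {u, w}) ` {w. E u w})"
  proof
    fix e
    assume "e \<in> cut_edges E S"
    then obtain u v where "e = {u, v}" "E u v" "u \<in> S" "v \<notin> S"
      by (rule cut_edgeE[OF G])
    moreover have "v \<in> V"
      using G \<open>E u v\<close> unfolding finite_graph_def by blast
    ultimately show "e \<in> (\<Union>u\<in>ts ! t. (\<lambda>w. {u, w}) ` {w. E u w})"
      using mem_bag_between_first_bags(2)[OF ts \<open>E u v\<close>] between by blast
  qed
  then have "card (cut_edges E S) \<le> card (\<Union>u\<in>ts ! t. (\<lambda>w. {u, w}) ` {w. E u w})"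
    by (rule card_mono[OF finite_incident_edges[OF G]])
  also have "\<dots> \<le> d * card (ts ! t)"
  proof (rule card_incident_edges_le[OF G deg])
    show "ts ! t \<subseteq> V"
      using ts nth_mem[OF \<open>t < length ts\<close>] unfolding is_path_decomp_def by blast
  qed
  also have "\<dots> \<le> d * path_decomp_width ts"
    using card_le_path_decomp_width[OF nth_mem[OF \<open>t < length ts\<close>]] by simp
  finally show ?thesis
    unfolding S_def .
qed

lemma BW_le_degree_mult_PW:
  assumes G: "finite_graph V E" and deg: "\<forall>v\<in>V. degree E v \<le> d"
  shows "BW V E \<le> d * PW V E"
proof -
  obtain ts where ts: "is_path_decomp V E ts" "path_decomp_width ts = PW V E"
    using PW_attained[OF G] .
  have "finite V"
    using G unfolding finite_graph_def by blast
  then obtain xs where "set xs = V" "distinct xs"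
    using finite_distinct_list by blast
  define bs where "bs = sort_key (first_bag ts) xs"
  have "set bs = V" "sorted (map (first_bag ts) bs)"
    unfolding bs_def using \<open>set xs = V\<close> by simp_all
  have "is_bubbling V bs"
    unfolding is_bubbling_def bs_def using \<open>set xs = V\<close> \<open>distinct xs\<close> by simp
  then have "BW V E \<le> bubbling_width E bs"
    by (rule BW_le)
  also have "\<dots> \<le> d * PW V E"
    unfolding bubbling_width_le_iff ts(2)[symmetric]
    using card_cut_edges_le_if_sorted_first_bag[OF G deg ts(1) \<open>set bs = V\<close>
        \<open>sorted (map (first_bag ts) bs)\<close>] by blast
  finally show ?thesis .
qed

theorem lemma2:
  fixes V :: "'a set" and E :: "'a \<Rightarrow> 'a \<Rightarrow> bool" and d :: nat
  assumes "finite_graph V E"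
    and "\<forall>v \<in> V. degree E v \<le> d"
  shows "real (PW V E) / 2 \<le> real (BW V E) \<and> BW V E \<le> d * PW V E"
  using PW_le_two_BW[OF assms(1)] BW_le_degree_mult_PW[OF assms] by linarith

end
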